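(* For every $n\geq1$, $$\sum_{\sigma\in\mathfrak S_{n+1}}(-1)^{{\rm des}(\sigma)}\Bigl(\frac{\beta}{2}\Bigr)^{{\rm LRmin}(\sigma)+{\rm RLmin}(\sigma)-2}=\begin{cases}(-1)^{\frac n2}\displaystyle\sum_{\sigma\in\mathfrak S^{d}_n}\beta^{{\rm RLmin}(\sigma)},& n\text{ even},\\ 0,& n\text{ odd},\end{cases}$$ where $\mathfrak S^d_n$ is the set of down-up permutations of $[n]$.
   Context: For $\sigma=\sigma_1\cdots\sigma_m\in\mathfrak S_m$: ${\rm des}(\sigma)$ is the number of $i\in[m-1]$ with $\sigma_i>\sigma_{i+1}$; ${\rm LRmin}(\sigma)$ is the number of $i$ with $\sigma_j>\sigma_i$ for all $j<i$; ${\rm RLmin}(\sigma)$ is the number of $i$ with $\sigma_j>\sigma_i$ for all $j>i$. A permutation is down-up if $\sigma_1>\sigma_2<\sigma_3>\sigma_4<\cdots$. *)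

theory Defs
  imports "HOL-Analysis.Analysis" "HOL-Combinatorics.Multiset_Permutations"
begin

text \<open>Permutations of [m] are represented as lists (one-line notation)
  in permutations_of_set {1..m}; positions are 0-indexed.\<close>

definition des :: "nat list \<Rightarrow> nat" where
  "des s = card {i. i + 1 < length s \<and> s ! i > s ! (i + 1)}"

definition LRmin :: "nat list \<Rightarrow> nat" where
  "LRmin s = card {i. i < length s \<and> (\<forall>j<i. s ! j > s ! i)}"

definition RLmin :: "nat list \<Rightarrow> nat" where
  "RLmin s = card {i. i < length s \<and> (\<forall>j. i < j \<and> j < length s \<longrightarrow> s ! j > s ! i)}"

text \<open>Down-up: s1 > s2 < s3 > s4 < ... ; with 0-indexing, for every adjacent pair
  (i, i+1), s!i > s!(i+1) iff i is even.\<close>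
definition down_up :: "nat list \<Rightarrow> bool" where
  "down_up s = (\<forall>i. i + 1 < length s \<longrightarrow> (s ! i > s ! (i + 1) \<longleftrightarrow> even i))"

end

theory Submission
  imports Defs "HOL-Computational_Algebra.Formal_Power_Series"
begin

text \<open>
  Write a permutation as \<open>\<alpha> @ m # \<gamma>\<close> with \<open>m\<close> its minimum. All statistics factor over this
  split: there is a descent into \<open>m\<close> iff \<open>\<alpha>\<close> is nonempty, \<open>m\<close> is the last left-to-right
  minimum and the first right-to-left minimum, and the word is down-up iff it is \<open>[m]\<close> or
  \<open>\<alpha>\<close> has odd length and \<open>\<alpha>\<close>, \<open>\<gamma>\<close> are down-up. For exponential generating functions this
  gives \<open>E' = (2 - E) E\<close> for the descent signs, \<open>F' = x (2 - F) E\<close> and \<open>G' = x (2 - E) G\<close>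
  when \<open>x\<close> marks left-to-right resp. right-to-left minima, and the left-hand side is
  \<open>P = (2 - F) G\<close>. Hence \<open>P' = -2x (E - 1) P\<close>, and \<open>E - 1 = T\<close> is the series \<open>tanh\<close> of signed
  tangent numbers. On the other side the signed generating function \<open>R\<close> of down-up
  permutations weighted by \<open>\<beta> ^ RLmin\<close> satisfies \<open>R' = -\<beta> T R\<close>. For \<open>x = \<beta> / 2\<close> both series
  solve the same differential equation with constant term 1, so they coincide.
\<close>

lemma des_Nil [simp]: "des [] = 0"
  by (simp add: des_def)

lemma des_Cons: "des (a # xs) = des xs + of_bool (xs \<noteq> [] \<and> hd xs < a)"
proof -
  have "{i. i + 1 < length (a # xs) \<and> (a # xs) ! (i + 1) < (a # xs) ! i}
      = (if xs \<noteq> [] \<and> hd xs < a then {0} else {}) \<union> Suc ` {i. i + 1 < length xs \<and> xs ! (i + 1) < xs ! i}"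
    (is "?L = ?R")
  proof (rule set_eqI)
    fix i show "i \<in> ?L \<longleftrightarrow> i \<in> ?R"
      by (cases i) (auto simp: hd_conv_nth)
  qed
  moreover have "finite {i. i + 1 < length xs \<and> xs ! (i + 1) < xs ! i}"
    by (rule finite_subset[of _ "{..<length xs}"]) auto
  ultimately show ?thesis
    by (simp add: des_def card_Un_disjoint card_image)
qed

lemma des_append:
  "des (xs @ ys) = des xs + des ys + of_bool (xs \<noteq> [] \<and> ys \<noteq> [] \<and> hd ys < last xs)"
proof (induction xs)
  case Nil
  then show ?case by simp
next
  case (Cons x xs)
  then show ?case
    by (cases xs) (simp_all add: des_Cons)
qed

lemma des_append_min:
  assumes "\<forall>y\<in>set \<alpha>. m < y" "\<forall>y\<in>set \<gamma>. m < y"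
  shows "des (\<alpha> @ m # \<gamma>) = des \<alpha> + des \<gamma> + of_bool (\<alpha> \<noteq> [])"
  using assms by (cases \<gamma>) (auto simp: des_append des_Cons)

lemma RLmin_Cons: "RLmin (a # xs) = RLmin xs + of_bool (\<forall>y\<in>set xs. a < y)"
proof -
  let ?R = "\<lambda>s. {i. i < length s \<and> (\<forall>j. i < j \<and> j < length s \<longrightarrow> s ! i < s ! j)}"
  have "?R (a # xs) = (if \<forall>y\<in>set xs. a < y then {0} else {}) \<union> Suc ` ?R xs"
  proof (rule set_eqI)
    fix i show "i \<in> ?R (a # xs) \<longleftrightarrow> i \<in> (if \<forall>y\<in>set xs. a < y then {0} else {}) \<union> Suc ` ?R xs"
    proof (cases i)
      case 0
      then show ?thesis
        by (auto simp: all_set_conv_all_nth gr0_conv_Suc)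
    next
      case (Suc k)
      have "(\<forall>j. Suc k < j \<and> j < Suc (length xs) \<longrightarrow> xs ! k < (a # xs) ! j)
          \<longleftrightarrow> (\<forall>j. k < j \<and> j < length xs \<longrightarrow> xs ! k < xs ! j)"
        by (force simp: less_Suc_eq_0_disj)
      with Suc show ?thesis
        by auto
    qed
  qed
  moreover have "finite (?R xs)"
    by (rule finite_subset[of _ "{..<length xs}"]) auto
  ultimately show ?thesis
    by (simp add: RLmin_def card_Un_disjoint card_image)
qed

lemma RLmin_append_min:
  assumes "\<forall>y\<in>set \<alpha>. m < y" "\<forall>y\<in>set \<gamma>. m < y"
  shows "RLmin (\<alpha> @ m # \<gamma>) = RLmin \<gamma> + 1"
  using assms by (induction \<alpha>) (auto simp: RLmin_Cons)

lemma LRmin_snoc: "LRmin (xs @ [a]) = LRmin xs + of_bool (\<forall>y\<in>set xs. a < y)"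
proof -
  let ?L = "\<lambda>s. {i. i < length s \<and> (\<forall>j<i. s ! i < s ! j)}"
  have "?L (xs @ [a]) = ?L xs \<union> (if \<forall>y\<in>set xs. a < y then {length xs} else {})"
    by (auto simp: nth_append all_set_conv_all_nth less_Suc_eq)
  moreover have "finite (?L xs)"
    by (rule finite_subset[of _ "{..<length xs}"]) auto
  ultimately show ?thesis
    by (simp add: LRmin_def card_insert_if)
qed

lemma LRmin_append_min:
  assumes "\<forall>y\<in>set \<alpha>. m < y" "\<forall>y\<in>set \<gamma>. m < y"
  shows "LRmin (\<alpha> @ m # \<gamma>) = LRmin \<alpha> + 1"
  using assms(2)
proof (induction \<gamma> rule: rev_induct)
  case Nil
  then show ?case
    using assms(1) LRmin_snoc[of \<alpha> m] by simp
next
  case (snoc x \<gamma>)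
  then show ?case
    using LRmin_snoc[of "\<alpha> @ m # \<gamma>" x] by force
qed

definition alternating :: "bool \<Rightarrow> nat list \<Rightarrow> bool" where
  "alternating b s \<longleftrightarrow> (\<forall>i. i + 1 < length s \<longrightarrow> (s ! (i + 1) < s ! i \<longleftrightarrow> even i = b))"

lemma down_up_eq_alternating: "down_up = alternating True"
  by (simp add: fun_eq_iff down_up_def alternating_def)

lemma down_up_Nil [simp]: "down_up []"
  by (simp add: down_up_def)

lemma alternating_Nil [simp]: "alternating b []"
  by (simp add: alternating_def)

lemma alternating_Cons:
  "alternating b (a # xs) \<longleftrightarrow> alternating (\<not> b) xs \<and> (xs \<noteq> [] \<longrightarrow> (hd xs < a \<longleftrightarrow> b))"
proof -
  have shift: "(\<forall>i. i + 1 < Suc n \<longrightarrow> P i) \<longleftrightarrow> (n \<noteq> 0 \<longrightarrow> P 0) \<and> (\<forall>i. i + 1 < n \<longrightarrow> P (Suc i))"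
    for n and P :: "nat \<Rightarrow> bool"
  proof -
    have "(\<forall>i. i + 1 < Suc n \<longrightarrow> P i) \<longleftrightarrow> (\<forall>i<n. P i)"
      by simp
    also have "\<dots> \<longleftrightarrow> (n \<noteq> 0 \<longrightarrow> P 0) \<and> (\<forall>i. i + 1 < n \<longrightarrow> P (Suc i))"
      by (cases n) (simp_all add: All_less_Suc2)
    finally show ?thesis .
  qed
  show ?thesis
    unfolding alternating_def
    by (subst length_Cons, subst shift) (auto simp: hd_conv_nth)
qed

lemma alternating_append:
  "alternating b (xs @ ys) \<longleftrightarrow> alternating b xs \<and> alternating (even (length xs) = b) ys
     \<and> (xs \<noteq> [] \<and> ys \<noteq> [] \<longrightarrow> (hd ys < last xs \<longleftrightarrow> odd (length xs) = b))"
proof (induction xs arbitrary: b)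
  case Nil
  then show ?case by simp
next
  case (Cons x xs)
  have "alternating b ((x # xs) @ ys) \<longleftrightarrow>
      alternating (\<not> b) (xs @ ys) \<and> (xs @ ys \<noteq> [] \<longrightarrow> (hd (xs @ ys) < x \<longleftrightarrow> b))"
    by (simp add: alternating_Cons)
  then show ?case
    unfolding Cons.IH by (cases xs) (simp_all add: alternating_Cons, blast)
qed

lemma down_up_append_min:
  assumes "\<forall>y\<in>set \<alpha>. m < y" "\<forall>y\<in>set \<gamma>. m < y"
  shows "down_up (\<alpha> @ m # \<gamma>) \<longleftrightarrow> \<alpha> = [] \<and> \<gamma> = [] \<or> odd (length \<alpha>) \<and> down_up \<alpha> \<and> down_up \<gamma>"
proof -
  have "\<alpha> \<noteq> [] \<Longrightarrow> m < last \<alpha>" "\<gamma> \<noteq> [] \<Longrightarrow> \<not> hd \<gamma> < m"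
    using assms by (auto dest: less_imp_not_less)
  then show ?thesis
    unfolding down_up_eq_alternating alternating_append[of _ \<alpha>] alternating_Cons
    by auto
qed

lemma sum_permutations_of_set_split:
  assumes "finite S" "m \<in> S"
  shows "(\<Sum>\<sigma>\<in>permutations_of_set S. h \<sigma>) =
    (\<Sum>A\<in>Pow (S - {m}). \<Sum>\<alpha>\<in>permutations_of_set A.
       \<Sum>\<gamma>\<in>permutations_of_set (S - {m} - A). h (\<alpha> @ m # \<gamma>))"
proof -
  let ?X = "SIGMA A:Pow (S - {m}). permutations_of_set A \<times> permutations_of_set (S - {m} - A)"
  let ?f = "\<lambda>(A, \<alpha>, \<gamma>). \<alpha> @ m # \<gamma>"
  have "inj_on ?f ?X"
  proof (rule inj_onI)
    fix x y assume "x \<in> ?X" "y \<in> ?X" "?f x = ?f y"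
    moreover obtain A \<alpha> \<gamma> A' \<alpha>' \<gamma>' where xy: "x = (A, \<alpha>, \<gamma>)" "y = (A', \<alpha>', \<gamma>')"
      by (cases x, cases y) auto
    ultimately have "set \<alpha> = A" "set \<alpha>' = A'" "m \<notin> set \<alpha>" "m \<notin> set \<gamma>"
      and "\<alpha> @ m # \<gamma> = \<alpha>' @ m # \<gamma>'"
      by (auto simp: permutations_of_set_def)
    with xy show "x = y"
      by (simp add: append_Cons_eq_iff)
  qed
  moreover have "?f ` ?X = permutations_of_set S"
  proof
    show "?f ` ?X \<subseteq> permutations_of_set S"
      using assms(2) by (auto simp: permutations_of_set_def)
  next
    show "permutations_of_set S \<subseteq> ?f ` ?X"
    proof
      fix \<sigma> assume \<sigma>: "\<sigma> \<in> permutations_of_set S"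
      then have "m \<in> set \<sigma>"
        using assms(2) by (simp add: permutations_of_set_def)
      then obtain \<alpha> \<gamma> where split: "\<sigma> = \<alpha> @ m # \<gamma>"
        by (meson split_list)
      with \<sigma> have "distinct (\<alpha> @ m # \<gamma>)" "set (\<alpha> @ m # \<gamma>) = S"
        by (simp_all add: permutations_of_set_def)
      then have "(set \<alpha>, \<alpha>, \<gamma>) \<in> ?X"
        by (auto simp: permutations_of_set_def)
      with split show "\<sigma> \<in> ?f ` ?X"
        by (intro image_eqI[where x = "(set \<alpha>, \<alpha>, \<gamma>)"]) auto
    qed
  qed
  ultimately have "(\<Sum>\<sigma>\<in>permutations_of_set S. h \<sigma>) = (\<Sum>x\<in>?X. h (?f x))"
    using sum.reindex[of ?f ?X h] by simp
  also have "\<dots> = (\<Sum>A\<in>Pow (S - {m}).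
      \<Sum>p\<in>permutations_of_set A \<times> permutations_of_set (S - {m} - A). h (fst p @ m # snd p))"
    by (subst sum.Sigma) (use assms(1) in \<open>auto simp: case_prod_beta\<close>)
  also have "\<dots> = (\<Sum>A\<in>Pow (S - {m}). \<Sum>\<alpha>\<in>permutations_of_set A.
       \<Sum>\<gamma>\<in>permutations_of_set (S - {m} - A). h (\<alpha> @ m # \<gamma>))"
    by (simp add: sum.cartesian_product case_prod_beta)
  finally show ?thesis .
qed

lemma sum_Pow_card:
  fixes g :: "nat \<Rightarrow> 'a::comm_semiring_1"
  assumes "finite T"
  shows "(\<Sum>A\<in>Pow T. g (card A)) = (\<Sum>j\<le>card T. of_nat (card T choose j) * g j)"
proof -
  have "(\<Sum>A\<in>Pow T. g (card A)) = (\<Sum>j\<le>card T. \<Sum>A\<in>{A. A \<in> Pow T \<and> card A = j}. g (card A))"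
    by (rule sum.group[symmetric]) (use assms in \<open>auto intro: card_mono\<close>)
  also have "\<dots> = (\<Sum>j\<le>card T. of_nat (card T choose j) * g j)"
    using n_subsets[OF assms] by (intro sum.cong) auto
  finally show ?thesis .
qed

lemma sum_permutations_of_set_split_Min:
  fixes w u v :: "'a::linorder list \<Rightarrow> 'b::comm_semiring_1"
  assumes "finite S" "card S = Suc n"
    and w: "\<And>m \<alpha> \<gamma>. \<forall>y\<in>set \<alpha>. m < y \<Longrightarrow> \<forall>y\<in>set \<gamma>. m < y \<Longrightarrow>
              w (\<alpha> @ m # \<gamma>) = c (length \<alpha>) (length \<alpha> + length \<gamma>) * u \<alpha> * v \<gamma>"
    and u: "\<And>A. card A < card S \<Longrightarrow> finite A \<Longrightarrow> (\<Sum>\<alpha>\<in>permutations_of_set A. u \<alpha>) = U (card A)"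
    and v: "\<And>B. card B < card S \<Longrightarrow> finite B \<Longrightarrow> (\<Sum>\<gamma>\<in>permutations_of_set B. v \<gamma>) = V (card B)"
  shows "(\<Sum>\<sigma>\<in>permutations_of_set S. w \<sigma>) =
    (\<Sum>j\<le>n. of_nat (n choose j) * (c j n * U j * V (n - j)))"
proof -
  define m where "m = Min S"
  define T where "T = S - {m}"
  have "S \<noteq> {}"
    using assms(2) by auto
  then have m: "m \<in> S" "\<And>y. y \<in> T \<Longrightarrow> m < y"
    using assms(1) by (auto simp: m_def T_def order.not_eq_order_implies_strict)
  have T: "finite T" "card T = n"
    using assms(1,2) m(1) by (simp_all add: T_def)
  have "(\<Sum>\<alpha>\<in>permutations_of_set A. \<Sum>\<gamma>\<in>permutations_of_set (T - A). w (\<alpha> @ m # \<gamma>))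
      = c (card A) n * U (card A) * V (n - card A)" if A: "A \<subseteq> T" for A
  proof -
    have cards: "card (T - A) = n - card A" "card A \<le> n" "card A < card S" "card (T - A) < card S"
      using A T assms(2) by (auto simp: card_Diff_subset card_mono finite_subset le_imp_less_Suc)
    have "(\<Sum>\<alpha>\<in>permutations_of_set A. \<Sum>\<gamma>\<in>permutations_of_set (T - A). w (\<alpha> @ m # \<gamma>))
        = (\<Sum>\<alpha>\<in>permutations_of_set A. \<Sum>\<gamma>\<in>permutations_of_set (T - A). c (card A) n * u \<alpha> * v \<gamma>)"
    proof (intro sum.cong refl)
      fix \<alpha> \<gamma> assume "\<alpha> \<in> permutations_of_set A" "\<gamma> \<in> permutations_of_set (T - A)"
      with A m(2) cards(1,2) show "w (\<alpha> @ m # \<gamma>) = c (card A) n * u \<alpha> * v \<gamma>"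
        by (subst w) (auto simp: permutations_of_set_def length_finite_permutations_of_set)
    qed
    also have "\<dots> = c (card A) n * (\<Sum>\<alpha>\<in>permutations_of_set A. u \<alpha>) * (\<Sum>\<gamma>\<in>permutations_of_set (T - A). v \<gamma>)"
      by (simp only: mult.assoc sum_product) (simp only: sum_distrib_left)
    also have "\<dots> = c (card A) n * U (card A) * V (n - card A)"
      using A T cards u[of A] v[of "T - A"] by (simp add: finite_subset)
    finally show ?thesis .
  qed
  then have "(\<Sum>\<sigma>\<in>permutations_of_set S. w \<sigma>) = (\<Sum>A\<in>Pow T. c (card A) n * U (card A) * V (n - card A))"
    using sum_permutations_of_set_split[OF assms(1) m(1), of w] by (simp add: T_def)
  also have "\<dots> = (\<Sum>j\<le>n. of_nat (n choose j) * (c j n * U j * V (n - j)))"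
    using sum_Pow_card[OF T(1), of "\<lambda>j. c j n * U j * V (n - j)"] T(2) by simp
  finally show ?thesis .
qed

text \<open>
  The sequences below are defined by the recurrences that the split at the minimum produces;
  the lemmas \<open>sum_des_sign\<close>, \<open>sum_down_up\<close>, \<dots> identify them with the permutation sums.
  The factor \<open>(-1) ^ of_bool (0 < j)\<close> accounts for the descent into the minimum, and the
  alternative \<open>n = 0\<close> in the down-up recurrences for the one-element permutation.
\<close>

fun des_sign :: "nat \<Rightarrow> real" where
  "des_sign 0 = 1"
| "des_sign (Suc n) =
    (\<Sum>j\<le>n. of_nat (n choose j) * ((-1) ^ of_bool (0 < j) * des_sign j * des_sign (n - j)))"

fun des_sign_LRmin :: "real \<Rightarrow> nat \<Rightarrow> real" where
  "des_sign_LRmin x 0 = 1"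
| "des_sign_LRmin x (Suc n) =
    (\<Sum>j\<le>n. of_nat (n choose j) * (x * (-1) ^ of_bool (0 < j) * des_sign_LRmin x j * des_sign (n - j)))"

fun des_sign_RLmin :: "real \<Rightarrow> nat \<Rightarrow> real" where
  "des_sign_RLmin x 0 = 1"
| "des_sign_RLmin x (Suc n) =
    (\<Sum>j\<le>n. of_nat (n choose j) * (x * (-1) ^ of_bool (0 < j) * des_sign j * des_sign_RLmin x (n - j)))"

fun down_up_count :: "nat \<Rightarrow> real" where
  "down_up_count 0 = 1"
| "down_up_count (Suc n) =
    (\<Sum>j\<le>n. of_nat (n choose j) * (of_bool (odd j \<or> n = 0) * down_up_count j * down_up_count (n - j)))"

fun down_up_RLmin :: "real \<Rightarrow> nat \<Rightarrow> real" where
  "down_up_RLmin b 0 = 1"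
| "down_up_RLmin b (Suc n) =
    (\<Sum>j\<le>n. of_nat (n choose j) * (b * of_bool (odd j \<or> n = 0) * down_up_count j * down_up_RLmin b (n - j)))"

definition des_sign_LRmin_RLmin :: "real \<Rightarrow> nat \<Rightarrow> real" where
  "des_sign_LRmin_RLmin x n =
    (\<Sum>j\<le>n. of_nat (n choose j) * ((-1) ^ of_bool (0 < j) * des_sign_LRmin x j * des_sign_RLmin x (n - j)))"

lemma sum_des_sign:
  "finite S \<Longrightarrow> (\<Sum>\<sigma>\<in>permutations_of_set S. (-1) ^ des \<sigma>) = des_sign (card S)"
proof (induction "card S" arbitrary: S rule: less_induct)
  case less
  show ?case
  proof (cases "card S")
    case (Suc n)
    show ?thesis
      unfolding Suc des_sign.simps
    proof (rule sum_permutations_of_set_split_Min[OF less.prems Suc])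
      show "(-1::real) ^ des (\<alpha> @ m # \<gamma>) = (-1) ^ of_bool (0 < length \<alpha>) * (-1) ^ des \<alpha> * (-1) ^ des \<gamma>"
        if "\<forall>y\<in>set \<alpha>. m < y" "\<forall>y\<in>set \<gamma>. m < y" for m and \<alpha> \<gamma> :: "nat list"
        using that by (simp add: des_append_min power_add)
    qed (blast intro: less.hyps)+
  qed (use less.prems in simp)
qed

lemma sum_des_sign_LRmin:
  "finite S \<Longrightarrow> (\<Sum>\<sigma>\<in>permutations_of_set S. (-1) ^ des \<sigma> * x ^ LRmin \<sigma>) = des_sign_LRmin x (card S)"
proof (induction "card S" arbitrary: S rule: less_induct)
  case less
  show ?case
  proof (cases "card S")
    case (Suc n)
    show ?thesis
      unfolding Suc des_sign_LRmin.simps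
    proof (rule sum_permutations_of_set_split_Min[OF less.prems Suc])
      show "(-1::real) ^ des (\<alpha> @ m # \<gamma>) * x ^ LRmin (\<alpha> @ m # \<gamma>) =
          x * (-1) ^ of_bool (0 < length \<alpha>) * ((-1) ^ des \<alpha> * x ^ LRmin \<alpha>) * (-1) ^ des \<gamma>"
        if "\<forall>y\<in>set \<alpha>. m < y" "\<forall>y\<in>set \<gamma>. m < y" for m and \<alpha> \<gamma> :: "nat list"
        using that by (simp add: des_append_min LRmin_append_min power_add)
    qed (blast intro: less.hyps sum_des_sign)+
  qed (use less.prems in \<open>simp add: LRmin_def\<close>)
qed

lemma sum_des_sign_RLmin:
  "finite S \<Longrightarrow> (\<Sum>\<sigma>\<in>permutations_of_set S. (-1) ^ des \<sigma> * x ^ RLmin \<sigma>) = des_sign_RLmin x (card S)"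
proof (induction "card S" arbitrary: S rule: less_induct)
  case less
  show ?case
  proof (cases "card S")
    case (Suc n)
    show ?thesis
      unfolding Suc des_sign_RLmin.simps
    proof (rule sum_permutations_of_set_split_Min[OF less.prems Suc])
      show "(-1::real) ^ des (\<alpha> @ m # \<gamma>) * x ^ RLmin (\<alpha> @ m # \<gamma>) =
          x * (-1) ^ of_bool (0 < length \<alpha>) * (-1) ^ des \<alpha> * ((-1) ^ des \<gamma> * x ^ RLmin \<gamma>)"
        if "\<forall>y\<in>set \<alpha>. m < y" "\<forall>y\<in>set \<gamma>. m < y" for m and \<alpha> \<gamma> :: "nat list"
        using that by (simp add: des_append_min RLmin_append_min power_add)
    qed (blast intro: less.hyps sum_des_sign)+
  qed (use less.prems in \<open>simp add: RLmin_def\<close>)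
qed

lemma sum_down_up:
  "finite S \<Longrightarrow> (\<Sum>\<sigma>\<in>permutations_of_set S. of_bool (down_up \<sigma>)) = down_up_count (card S)"
proof (induction "card S" arbitrary: S rule: less_induct)
  case less
  show ?case
  proof (cases "card S")
    case (Suc n)
    show ?thesis
      unfolding Suc down_up_count.simps
    proof (rule sum_permutations_of_set_split_Min[OF less.prems Suc,
          where c = "\<lambda>j n. of_bool (odd j \<or> n = 0)"])
      show "(of_bool (down_up (\<alpha> @ m # \<gamma>)) :: real) =
          of_bool (odd (length \<alpha>) \<or> length \<alpha> + length \<gamma> = 0) * of_bool (down_up \<alpha>) * of_bool (down_up \<gamma>)"
        if "\<forall>y\<in>set \<alpha>. m < y" "\<forall>y\<in>set \<gamma>. m < y" for m and \<alpha> \<gamma> :: "nat list"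
        using that by (auto simp: down_up_append_min)
    qed (blast intro: less.hyps)+
  qed (use less.prems in simp)
qed

lemma sum_down_up_RLmin:
  "finite S \<Longrightarrow> (\<Sum>\<sigma>\<in>permutations_of_set S. of_bool (down_up \<sigma>) * b ^ RLmin \<sigma>) = down_up_RLmin b (card S)"
proof (induction "card S" arbitrary: S rule: less_induct)
  case less
  show ?case
  proof (cases "card S")
    case (Suc n)
    show ?thesis
      unfolding Suc down_up_RLmin.simps
    proof (rule sum_permutations_of_set_split_Min[OF less.prems Suc,
          where c = "\<lambda>j n. b * of_bool (odd j \<or> n = 0)" and u = "\<lambda>\<alpha>. of_bool (down_up \<alpha>)"])
      show "of_bool (down_up (\<alpha> @ m # \<gamma>)) * b ^ RLmin (\<alpha> @ m # \<gamma>) =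
          b * of_bool (odd (length \<alpha>) \<or> length \<alpha> + length \<gamma> = 0) * of_bool (down_up \<alpha>) *
          (of_bool (down_up \<gamma>) * b ^ RLmin \<gamma>)"
        if "\<forall>y\<in>set \<alpha>. m < y" "\<forall>y\<in>set \<gamma>. m < y" for m and \<alpha> \<gamma> :: "nat list"
        using that by (auto simp: down_up_append_min RLmin_append_min)
    qed (blast intro: less.hyps sum_down_up)+
  qed (use less.prems in \<open>simp add: RLmin_def\<close>)
qed

lemma sum_des_sign_LRmin_RLmin:
  assumes "finite S" "card S = Suc n"
  shows "(\<Sum>\<sigma>\<in>permutations_of_set S. (-1) ^ des \<sigma> * x ^ (LRmin \<sigma> + RLmin \<sigma> - 2)) =
    des_sign_LRmin_RLmin x n"
  unfolding des_sign_LRmin_RLmin_def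
proof (rule sum_permutations_of_set_split_Min[OF assms])
  show "(-1::real) ^ des (\<alpha> @ m # \<gamma>) * x ^ (LRmin (\<alpha> @ m # \<gamma>) + RLmin (\<alpha> @ m # \<gamma>) - 2) =
      (-1) ^ of_bool (0 < length \<alpha>) * ((-1) ^ des \<alpha> * x ^ LRmin \<alpha>) * ((-1) ^ des \<gamma> * x ^ RLmin \<gamma>)"
    if "\<forall>y\<in>set \<alpha>. m < y" "\<forall>y\<in>set \<gamma>. m < y" for m and \<alpha> \<gamma> :: "nat list"
    using that by (simp add: des_append_min LRmin_append_min RLmin_append_min power_add mult_ac)
qed (blast intro: sum_des_sign_LRmin sum_des_sign_RLmin)+

text \<open>For odd \<open>n\<close>, \<open>down_up_count n\<close> is the tangent number; \<open>egf signed_tangent\<close> is \<open>tanh\<close>.\<close>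

definition signed_tangent :: "nat \<Rightarrow> real" where
  "signed_tangent n = (if odd n then (-1) ^ (n div 2) * down_up_count n else 0)"

definition signed_down_up_RLmin :: "real \<Rightarrow> nat \<Rightarrow> real" where
  "signed_down_up_RLmin b n = (if even n then (-1) ^ (n div 2) * down_up_RLmin b n else 0)"

lemma minus_one_power_Suc_div_two:
  assumes "odd j" "j \<le> k"
  shows "(-1 :: 'a::ring_1) ^ (Suc k div 2) = - ((-1) ^ (j div 2) * (-1) ^ ((k - j) div 2))"
proof -
  from assms have "Suc k div 2 = Suc (j div 2 + (k - j) div 2)"
    by (auto elim!: oddE)
  then show ?thesis
    by (simp add: power_add)
qed

lemma signed_tangent_Suc:
  "signed_tangent (Suc k) =
    of_bool (k = 0) - (\<Sum>j\<le>k. of_nat (k choose j) * (signed_tangent j * signed_tangent (k - j)))"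
proof (cases "even k")
  case True
  have summand: "- (signed_tangent j * signed_tangent (k - j)) =
      (-1) ^ (Suc k div 2) * (of_bool (odd j) * down_up_count j * down_up_count (k - j))"
    if "j \<le> k" for j
  proof (cases "odd j")
    case odd_j: True
    with that True have "odd (k - j)"
      by simp
    with odd_j have "- (signed_tangent j * signed_tangent (k - j)) =
        - ((-1) ^ (j div 2) * (-1) ^ ((k - j) div 2)) * (down_up_count j * down_up_count (k - j))"
      by (simp add: signed_tangent_def)
    with odd_j that show ?thesis
      by (simp add: minus_one_power_Suc_div_two)
  qed (simp add: signed_tangent_def)
  show ?thesis
  proof (cases "k = 0")
    case False
    have "(\<Sum>j\<le>k. of_nat (k choose j) * (- (signed_tangent j * signed_tangent (k - j))))
        = (-1) ^ (Suc k div 2) * down_up_count (Suc k)"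
      using False by (simp add: summand sum_distrib_left mult_ac)
    with True False show ?thesis
      by (simp add: signed_tangent_def sum_negf)
  qed (simp add: signed_tangent_def)
next
  case False
  then have "signed_tangent j * signed_tangent (k - j) = 0" if "j \<le> k" for j
    using that by (auto simp: signed_tangent_def)
  then have "(\<Sum>j\<le>k. of_nat (k choose j) * (signed_tangent j * signed_tangent (k - j))) = 0"
    by (intro sum.neutral) simp
  with False show ?thesis
    by (simp add: signed_tangent_def odd_pos)
qed

lemma signed_down_up_RLmin_Suc:
  "signed_down_up_RLmin b (Suc k) =
    (\<Sum>j\<le>k. of_nat (k choose j) * (- b * signed_tangent j * signed_down_up_RLmin b (k - j)))"
proof (cases "odd k")
  case True
  have "- b * signed_tangent j * signed_down_up_RLmin b (k - j) =
      (-1) ^ (Suc k div 2) * (b * of_bool (odd j) * down_up_count j * down_up_RLmin b (k - j))"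
    if "j \<le> k" for j
  proof (cases "odd j")
    case odd_j: True
    with that True have "even (k - j)"
      by simp
    with odd_j have "- b * signed_tangent j * signed_down_up_RLmin b (k - j) =
        - ((-1) ^ (j div 2) * (-1) ^ ((k - j) div 2)) * (b * down_up_count j * down_up_RLmin b (k - j))"
      by (simp add: signed_tangent_def signed_down_up_RLmin_def)
    with odd_j that show ?thesis
      by (simp add: minus_one_power_Suc_div_two)
  qed (simp add: signed_tangent_def)
  moreover have "k \<noteq> 0"
    using True odd_pos by blast
  ultimately have "(\<Sum>j\<le>k. of_nat (k choose j) * (- b * signed_tangent j * signed_down_up_RLmin b (k - j)))
      = (-1) ^ (Suc k div 2) * down_up_RLmin b (Suc k)"
    by (simp add: sum_distrib_left mult_ac)
  with True show ?thesis
    by (simp add: signed_down_up_RLmin_def)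
next
  case False
  then have "signed_tangent j * signed_down_up_RLmin b (k - j) = 0" if "j \<le> k" for j
    using that by (auto simp: signed_tangent_def signed_down_up_RLmin_def)
  then have "(\<Sum>j\<le>k. of_nat (k choose j) * (- b * signed_tangent j * signed_down_up_RLmin b (k - j))) = 0"
    by (intro sum.neutral) simp
  with False show ?thesis
    by (simp add: signed_down_up_RLmin_def)
qed

lemma fps_mult_nth_cong:
  assumes "\<And>i. i \<le> n \<Longrightarrow> fps_nth f i = fps_nth f' i" "\<And>i. i \<le> n \<Longrightarrow> fps_nth g i = fps_nth g' i"
  shows "fps_nth (f * g) n = fps_nth (f' * g') n"
  using assms by (simp add: fps_mult_nth)

lemma fps_deriv_eq_unique:
  fixes f g :: "'a::field_char_0 fps"
  assumes "fps_deriv f = \<Phi> f" "fps_deriv g = \<Phi> g" "fps_nth f 0 = fps_nth g 0"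
    and causal: "\<And>n h h'. (\<And>i. i \<le> n \<Longrightarrow> fps_nth h i = fps_nth h' i) \<Longrightarrow> fps_nth (\<Phi> h) n = fps_nth (\<Phi> h') n"
  shows "f = g"
proof -
  have "fps_nth f n = fps_nth g n" for n
  proof (induction n rule: less_induct)
    case (less n)
    show ?case
    proof (cases n)
      case (Suc m)
      have "of_nat (Suc m) * fps_nth f (Suc m) = fps_nth (\<Phi> f) m"
        using fps_deriv_nth[of f m] assms(1) by simp
      also have "\<dots> = fps_nth (\<Phi> g) m"
        using Suc less.IH by (intro causal) simp
      also have "\<dots> = of_nat (Suc m) * fps_nth g (Suc m)"
        using fps_deriv_nth[of g m] assms(2) by simp
      finally show ?thesis
        using Suc by (simp del: of_nat_Suc)
    qed (simp add: assms(3))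
  qed
  then show ?thesis
    by (simp add: fps_eq_iff)
qed

definition egf :: "(nat \<Rightarrow> 'a::field_char_0) \<Rightarrow> 'a fps" where
  "egf a = Abs_fps (\<lambda>n. a n / fact n)"

lemma egf_nth [simp]: "fps_nth (egf a) n = a n / fact n"
  by (simp add: egf_def)

lemma egf_eq_iff: "egf a = egf b \<longleftrightarrow> a = b"
  by (auto simp: fps_eq_iff fun_eq_iff)

lemma egf_cmult: "egf (\<lambda>n. c * a n) = fps_const c * egf a"
  by (rule fps_ext) simp

lemma egf_mult: "egf a * egf b = egf (\<lambda>n. \<Sum>j\<le>n. of_nat (n choose j) * (a j * b (n - j)))"
proof (rule fps_ext)
  fix n
  have "a j / fact j * (b (n - j) / fact (n - j)) = of_nat (n choose j) * (a j * b (n - j)) / fact n"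
    if "j \<le> n" for j
    using that by (simp add: binomial_fact field_simps)
  then show "fps_nth (egf a * egf b) n = fps_nth (egf (\<lambda>n. \<Sum>j\<le>n. of_nat (n choose j) * (a j * b (n - j)))) n"
    by (simp add: fps_mult_nth atLeast0AtMost sum_divide_distrib)
qed

lemma fps_deriv_egf: "fps_deriv (egf a) = egf (\<lambda>n. a (Suc n))"
  by (rule fps_ext) (simp add: field_simps del: of_nat_Suc)

lemma egf_sign_times:
  "egf (\<lambda>j. (-1) ^ of_bool (0 < j) * a j) = 2 * fps_const (a 0) - egf a"
  by (rule fps_ext) (simp add: fps_numeral_nth)

lemma fps_deriv_egf_des_sign:
  "fps_deriv (egf des_sign) = (2 - egf des_sign) * egf des_sign"
proof -
  have "(2 - egf des_sign) * egf des_sign = egf (\<lambda>j. (-1) ^ of_bool (0 < j) * des_sign j) * egf des_sign"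
    by (simp add: egf_sign_times)
  also have "\<dots> = fps_deriv (egf des_sign)"
    by (simp add: egf_mult fps_deriv_egf mult.assoc)
  finally show ?thesis ..
qed

lemma fps_deriv_egf_des_sign_LRmin:
  "fps_deriv (egf (des_sign_LRmin x)) = fps_const x * ((2 - egf (des_sign_LRmin x)) * egf des_sign)"
proof -
  have "(2 - egf (des_sign_LRmin x)) * egf des_sign =
      egf (\<lambda>j. (-1) ^ of_bool (0 < j) * des_sign_LRmin x j) * egf des_sign"
    by (simp add: egf_sign_times)
  then have "fps_const x * ((2 - egf (des_sign_LRmin x)) * egf des_sign) =
      egf (\<lambda>n. x * (\<Sum>j\<le>n. of_nat (n choose j) * ((-1) ^ of_bool (0 < j) * des_sign_LRmin x j * des_sign (n - j))))"
    by (simp add: egf_mult egf_cmult)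
  also have "\<dots> = fps_deriv (egf (des_sign_LRmin x))"
    by (simp add: fps_deriv_egf sum_distrib_left mult_ac)
  finally show ?thesis ..
qed

lemma fps_deriv_egf_des_sign_RLmin:
  "fps_deriv (egf (des_sign_RLmin x)) = fps_const x * ((2 - egf des_sign) * egf (des_sign_RLmin x))"
proof -
  have "(2 - egf des_sign) * egf (des_sign_RLmin x) =
      egf (\<lambda>j. (-1) ^ of_bool (0 < j) * des_sign j) * egf (des_sign_RLmin x)"
    by (simp add: egf_sign_times)
  then have "fps_const x * ((2 - egf des_sign) * egf (des_sign_RLmin x)) =
      egf (\<lambda>n. x * (\<Sum>j\<le>n. of_nat (n choose j) * ((-1) ^ of_bool (0 < j) * des_sign j * des_sign_RLmin x (n - j))))"
    by (simp add: egf_mult egf_cmult)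
  also have "\<dots> = fps_deriv (egf (des_sign_RLmin x))"
    by (simp add: fps_deriv_egf sum_distrib_left mult_ac)
  finally show ?thesis ..
qed

lemma fps_deriv_egf_signed_tangent:
  "fps_deriv (egf signed_tangent) = 1 - egf signed_tangent * egf signed_tangent"
proof -
  have "1 - egf signed_tangent * egf signed_tangent = egf (\<lambda>n. of_bool (n = 0) -
      (\<Sum>j\<le>n. of_nat (n choose j) * (signed_tangent j * signed_tangent (n - j))))"
    by (rule fps_ext) (simp add: egf_mult diff_divide_distrib)
  also have "\<dots> = fps_deriv (egf signed_tangent)"
    by (simp add: fps_deriv_egf signed_tangent_Suc)
  finally show ?thesis ..
qed

lemma fps_deriv_egf_signed_down_up_RLmin:
  "fps_deriv (egf (signed_down_up_RLmin b)) =
    fps_const (- b) * egf signed_tangent * egf (signed_down_up_RLmin b)"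
proof -
  have "fps_const (- b) * egf signed_tangent * egf (signed_down_up_RLmin b) =
      fps_const (- b) * egf (\<lambda>n. \<Sum>j\<le>n. of_nat (n choose j) * (signed_tangent j * signed_down_up_RLmin b (n - j)))"
    by (simp add: egf_mult mult.assoc)
  also have "\<dots> = egf (\<lambda>n. - b * (\<Sum>j\<le>n. of_nat (n choose j) * (signed_tangent j * signed_down_up_RLmin b (n - j))))"
    by (rule egf_cmult[symmetric])
  also have "\<dots> = fps_deriv (egf (signed_down_up_RLmin b))"
    by (simp add: fps_deriv_egf signed_down_up_RLmin_Suc sum_distrib_left mult_ac)
  finally show ?thesis ..
qed

lemma egf_des_sign: "egf des_sign = 1 + egf signed_tangent"
proof (rule fps_deriv_eq_unique[where \<Phi> = "\<lambda>h. (2 - h) * h"])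
  show "fps_deriv (egf des_sign) = (2 - egf des_sign) * egf des_sign"
    by (rule fps_deriv_egf_des_sign)
  have "(2 - (1 + egf signed_tangent)) * (1 + egf signed_tangent) =
      1 - egf signed_tangent * egf signed_tangent"
    by (simp add: algebra_simps)
  then show "fps_deriv (1 + egf signed_tangent) =
      (2 - (1 + egf signed_tangent)) * (1 + egf signed_tangent)"
    by (simp add: fps_deriv_egf_signed_tangent)
  show "fps_nth (egf des_sign) 0 = fps_nth (1 + egf signed_tangent) 0"
    by (simp add: signed_tangent_def)
qed (intro fps_mult_nth_cong; simp)

lemma fps_deriv_egf_des_sign_LRmin_RLmin:
  "fps_deriv (egf (des_sign_LRmin_RLmin x)) =
    fps_const (- 2 * x) * egf signed_tangent * egf (des_sign_LRmin_RLmin x)"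
proof -
  have "(2 - egf (des_sign_LRmin x)) * egf (des_sign_RLmin x) =
      egf (\<lambda>j. (-1) ^ of_bool (0 < j) * des_sign_LRmin x j) * egf (des_sign_RLmin x)"
    by (simp add: egf_sign_times)
  also have "\<dots> = egf (des_sign_LRmin_RLmin x)"
    by (simp add: egf_mult des_sign_LRmin_RLmin_def[abs_def] mult.assoc)
  finally have P: "egf (des_sign_LRmin_RLmin x) = (2 - egf (des_sign_LRmin x)) * egf (des_sign_RLmin x)" ..
  have ring: "- (c * ((2 - F) * (1 + T))) * G + (2 - F) * (c * ((2 - (1 + T)) * G)) =
      - (2 * c) * T * ((2 - F) * G)" for c F G T :: "real fps"
    by (simp add: algebra_simps)
  have "fps_deriv ((2 - egf (des_sign_LRmin x)) * egf (des_sign_RLmin x)) =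
      - fps_deriv (egf (des_sign_LRmin x)) * egf (des_sign_RLmin x) +
      (2 - egf (des_sign_LRmin x)) * fps_deriv (egf (des_sign_RLmin x))"
    by simp
  also have "\<dots> = - (2 * fps_const x) * egf signed_tangent * ((2 - egf (des_sign_LRmin x)) * egf (des_sign_RLmin x))"
    unfolding fps_deriv_egf_des_sign_LRmin fps_deriv_egf_des_sign_RLmin egf_des_sign by (rule ring)
  also have "- (2 * fps_const x) = fps_const (- 2 * x)"
    by (simp add: numeral_fps_const)
  finally show ?thesis
    unfolding P .
qed

lemma des_sign_LRmin_RLmin_eq: "des_sign_LRmin_RLmin (b / 2) = signed_down_up_RLmin b"
proof -
  have "egf (des_sign_LRmin_RLmin (b / 2)) = egf (signed_down_up_RLmin b)"
  proof (rule fps_deriv_eq_unique[where \<Phi> = "\<lambda>h. fps_const (- b) * egf signed_tangent * h"])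
    show "fps_deriv (egf (des_sign_LRmin_RLmin (b / 2))) =
        fps_const (- b) * egf signed_tangent * egf (des_sign_LRmin_RLmin (b / 2))"
      by (simp add: fps_deriv_egf_des_sign_LRmin_RLmin)
    show "fps_nth (egf (des_sign_LRmin_RLmin (b / 2))) 0 = fps_nth (egf (signed_down_up_RLmin b)) 0"
      by (simp add: des_sign_LRmin_RLmin_def signed_down_up_RLmin_def)
  qed (simp_all add: fps_deriv_egf_signed_down_up_RLmin fps_mult_nth_cong)
  then show ?thesis
    by (simp add: egf_eq_iff)
qed

theorem theorem1p12:
  fixes n :: nat and \<beta> :: real
  assumes "n \<ge> 1"
  shows "(\<Sum>s\<in>permutations_of_set {1..n+1}.
            (-1) ^ des s * (\<beta> / 2) ^ (LRmin s + RLmin s - 2)) =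
         (if even n
          then (-1) ^ (n div 2) * (\<Sum>s\<in>{s\<in>permutations_of_set {1..n}. down_up s}. \<beta> ^ RLmin s)
          else 0)"
proof -
  have "(\<Sum>s\<in>permutations_of_set {1..n+1}. (-1) ^ des s * (\<beta> / 2) ^ (LRmin s + RLmin s - 2))
      = signed_down_up_RLmin \<beta> n"
    by (simp add: sum_des_sign_LRmin_RLmin des_sign_LRmin_RLmin_eq)
  moreover have "(\<Sum>s\<in>{s\<in>permutations_of_set {1..n}. down_up s}. \<beta> ^ RLmin s) = down_up_RLmin \<beta> n"
    using sum_down_up_RLmin[of "{1..n}" \<beta>] by (simp add: Int_def)
  ultimately show ?thesis
    by (simp add: signed_down_up_RLmin_def)
qed

end
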